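(* Let $A\in\mathbb{R}^{m\times n}$, let $\sigma=\|A\|^2$ (squared spectral norm), and let $v\in\mathbb{R}^n$ with $\|v\|=1$. Define $$u=\begin{cases}\dfrac{\sigma v-A^tAv}{\sqrt{\sigma-\|Av\|^2}} & \text{if } v \text{ is not a dominant singular vector of } A,\\[2mm] 0 & \text{otherwise,}\end{cases}$$ and $H=\sigma\mathbf{I}-uu^t$. Then $v^t(H-A^tA)v=0$ and $H\succeq A^tA$.
   Context: $\|\cdot\|$ is the Euclidean norm on vectors and the induced (spectral) norm on matrices, so $\|A\|^2=\lambda_{\max}(A^tA)$. A unit vector $v$ is a dominant singular vector of $A$ if $\|Av\|=\|A\|$ (equivalently, $v$ is an eigenvector of $A^tA$ for its largest eigenvalue); if $v$ is not dominant then $\sigma-\|Av\|^2>0$. $\mathbf I$ is the identity matrix, $M\succeq N$ means $M-N$ is positive semidefinite. *)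

theory Defs
  imports "HOL-Analysis.Analysis"
begin

definition spec_norm :: "real^'n^'m \<Rightarrow> real" where
  "spec_norm A = onorm (\<lambda>x. A *v x)"

definition dominant_sv :: "real^'n^'m \<Rightarrow> real^'n \<Rightarrow> bool" where
  "dominant_sv A v \<longleftrightarrow> norm v = 1 \<and> norm (A *v v) = spec_norm A"

definition loewner_ge :: "real^'n^'n \<Rightarrow> real^'n^'n \<Rightarrow> bool" where
  "loewner_ge M N \<longleftrightarrow> (\<forall>x. x \<bullet> ((M - N) *v x) \<ge> 0)"

definition outer :: "real^'n \<Rightarrow> real^'n \<Rightarrow> real^'n^'n" where
  "outer u w = (\<chi> i j. u $ i * w $ j)"

end

theory Submission
  imports Defs
begin

text \<open>With \<open>Q\<close> the quadratic form of \<open>\<sigma>I - A\<^sup>tA\<close>, which is positive semidefinite because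
  \<open>\<sigma> = \<parallel>A\<parallel>\<^sup>2\<close>, the vector \<open>w = \<sigma>v - A\<^sup>tAv\<close> satisfies \<open>x \<bullet> w = Q x v\<close> and
  \<open>u = w / sqrt (Q v v)\<close>, so
  \<open>x\<^sup>t(H - A\<^sup>tA)x = Q x x - (Q x v)\<^sup>2 / Q v v\<close>. This is nonnegative by the Cauchy-Schwarz
  inequality for \<open>Q\<close> and vanishes at \<open>x = v\<close>. In the dominant case \<open>Q v v = 0\<close>, and the
  convention \<open>1 / 0 = 0\<close> makes the same formula produce \<open>u = 0\<close>.\<close>

lemma quadratic_nonneg_imp_discriminant_le:
  fixes a b c :: real
  assumes nonneg: "\<And>t. 0 \<le> a - 2 * t * b + t\<^sup>2 * c" and "0 \<le> c"
  shows "b\<^sup>2 \<le> a * c"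
proof (cases "c = 0")
  case True
  have "b = 0"
  proof (rule ccontr)
    assume "b \<noteq> 0"
    then have "a - 2 * ((a + 1) / (2 * b)) * b = -1" by (simp add: field_simps)
    with nonneg[of "(a + 1) / (2 * b)"] True show False by simp
  qed
  with True show ?thesis by simp
next
  case False
  with \<open>0 \<le> c\<close> have "c > 0" by simp
  have "0 \<le> a - 2 * (b / c) * b + (b / c)\<^sup>2 * c" by (rule nonneg)
  also have "\<dots> = (a * c - b\<^sup>2) / c"
    using \<open>c > 0\<close> by (simp add: field_simps power2_eq_square)
  finally show ?thesis using \<open>c > 0\<close> by (simp add: zero_le_divide_iff)
qed

lemma inner_transpose_matrix_mult:
  fixes A :: "real^'n^'m"
  shows "x \<bullet> ((transpose A ** A) *v y) = (A *v x) \<bullet> (A *v y)"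
proof -
  have "x \<bullet> ((transpose A ** A) *v y) = (transpose A *v (A *v y)) \<bullet> x"
    by (simp add: matrix_vector_mul_assoc inner_commute)
  also have "\<dots> = (A *v y) \<bullet> (A *v x)"
    by (simp only: transpose_matrix_vector dot_lmul_matrix)
  finally show ?thesis by (simp add: inner_commute)
qed

lemma outer_mult_vector: "outer u w *v x = (w \<bullet> x) *\<^sub>R (u :: real^'n)"
  by (simp add: vec_eq_iff outer_def matrix_vector_mult_def inner_vec_def
      sum_distrib_left mult.commute mult.left_commute)

lemma norm_matrix_vector_le_spec_norm: "norm (A *v x) \<le> spec_norm A * norm x"
  unfolding spec_norm_def using onorm[OF matrix_vector_mul_bounded_linear] .

definition gram_gap :: "real \<Rightarrow> real^'n^'m \<Rightarrow> real^'n \<Rightarrow> real^'n \<Rightarrow> real" where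
  "gram_gap \<sigma> A x y = \<sigma> * (x \<bullet> y) - (A *v x) \<bullet> (A *v y)"

lemma gram_gap_eq_inner:
  "gram_gap \<sigma> A x y = x \<bullet> ((\<sigma> *\<^sub>R mat 1 - transpose A ** A) *v y)"
  by (simp add: gram_gap_def matrix_vector_mult_diff_rdistrib inner_transpose_matrix_mult
      scaleR_matrix_vector_assoc[symmetric] inner_diff_right)

lemma gram_gap_self_nonneg:
  assumes "(spec_norm A)\<^sup>2 \<le> \<sigma>"
  shows "0 \<le> gram_gap \<sigma> A x x"
proof -
  have "(norm (A *v x))\<^sup>2 \<le> (spec_norm A * norm x)\<^sup>2"
    by (simp add: power_mono norm_matrix_vector_le_spec_norm)
  also have "\<dots> \<le> \<sigma> * (norm x)\<^sup>2"
    using assms by (simp add: power_mult_distrib mult_right_mono)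
  finally show ?thesis
    by (simp add: gram_gap_def power2_norm_eq_inner)
qed

lemma gram_gap_diff_scaleR:
  "gram_gap \<sigma> A (x - t *\<^sub>R v) (x - t *\<^sub>R v)
     = gram_gap \<sigma> A x x - 2 * t * gram_gap \<sigma> A x v + t\<^sup>2 * gram_gap \<sigma> A v v"
  by (simp add: gram_gap_def matrix_vector_mult_diff_distrib inner_diff_left inner_diff_right
      matrix_vector_mult_scaleR inner_commute algebra_simps power2_eq_square)

lemma gram_gap_cauchy_schwarz:
  assumes "(spec_norm A)\<^sup>2 \<le> \<sigma>"
  shows "(gram_gap \<sigma> A x v)\<^sup>2 \<le> gram_gap \<sigma> A x x * gram_gap \<sigma> A v v"
  using gram_gap_self_nonneg[OF assms]
  by (intro quadratic_nonneg_imp_discriminant_le) (metis gram_gap_diff_scaleR)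

lemma dominant_sv_iff_gram_gap_eq_0:
  assumes "norm v = 1"
  shows "dominant_sv A v \<longleftrightarrow> gram_gap ((spec_norm A)\<^sup>2) A v v = 0"
proof -
  have "0 \<le> spec_norm A"
    unfolding spec_norm_def by (rule onorm_pos_le[OF matrix_vector_mul_bounded_linear])
  moreover have "gram_gap ((spec_norm A)\<^sup>2) A v v = (spec_norm A)\<^sup>2 - (norm (A *v v))\<^sup>2"
    using assms by (simp add: gram_gap_def power2_norm_eq_inner[symmetric])
  ultimately show ?thesis
    using assms by (auto simp: dominant_sv_def power2_eq_iff_nonneg)
qed

theorem lemma1:
  fixes A :: "real^'n^'m" and v :: "real^'n"
  assumes "norm v = 1"
  defines "\<sigma> \<equiv> (spec_norm A)\<^sup>2"
  defines "u \<equiv> (if \<not> dominant_sv A v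
                 then (1 / sqrt (\<sigma> - (norm (A *v v))\<^sup>2)) *\<^sub>R
                        (\<sigma> *\<^sub>R v - (transpose A ** A) *v v)
                 else 0)"
  defines "H \<equiv> \<sigma> *\<^sub>R mat 1 - outer u u"
  shows "v \<bullet> ((H - transpose A ** A) *v v) = 0 \<and> loewner_ge H (transpose A ** A)"
proof -
  define Q where "Q = gram_gap \<sigma> A"
  have "Q v v = \<sigma> - (norm (A *v v))\<^sup>2"
    using assms(1) by (simp add: Q_def gram_gap_def power2_norm_eq_inner[symmetric])
  moreover have "dominant_sv A v \<longleftrightarrow> Q v v = 0"
    using dominant_sv_iff_gram_gap_eq_0[OF assms(1)] by (simp add: Q_def \<sigma>_def)
  ultimately have u_eq: "u = (1 / sqrt (Q v v)) *\<^sub>R (\<sigma> *\<^sub>R v - (transpose A ** A) *v v)"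
    by (cases "dominant_sv A v") (simp_all add: u_def)
  have Q_vv_nonneg: "0 \<le> Q v v"
    by (simp add: Q_def \<sigma>_def gram_gap_self_nonneg)
  have "x \<bullet> ((H - transpose A ** A) *v x) = Q x x - (Q x v)\<^sup>2 / Q v v" for x
  proof -
    have "x \<bullet> ((H - transpose A ** A) *v x) = Q x x - (u \<bullet> x)\<^sup>2"
      by (simp add: H_def Q_def gram_gap_eq_inner outer_mult_vector
          matrix_vector_mult_diff_rdistrib inner_diff_right power2_eq_square inner_commute)
    moreover have "u \<bullet> x = Q x v / sqrt (Q v v)"
      by (simp add: u_eq Q_def gram_gap_eq_inner inner_commute
          matrix_vector_mult_diff_rdistrib scaleR_matrix_vector_assoc[symmetric])
    ultimately show ?thesis
      using Q_vv_nonneg by (simp add: power_divide)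
  qed
  moreover have "Q x x - (Q x v)\<^sup>2 / Q v v \<ge> 0" for x
    using gram_gap_cauchy_schwarz[of A \<sigma> x v] gram_gap_self_nonneg[of A \<sigma> x] Q_vv_nonneg
    by (cases "Q v v = 0") (simp_all add: Q_def \<sigma>_def field_simps)
  ultimately show ?thesis
    by (simp add: loewner_ge_def power2_eq_square)
qed

end
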